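(* Let $\omega\in[n]^*$, $j\in[n]$, and $\sigma\in\mathrm{Sym}_n$ with $\sigma(j)=n$. Then \[B_\omega=\mathrm{Comp}_0\big(L^\circ(a^j_\omega;M_\omega,\sigma)\setminus L^\circ(0;M_\omega,\sigma)\big)\] and \[B_{\omega*j}=\mathrm{Comp}_0\big(L(a^j_\omega;M_\omega,\sigma)\setminus L^\circ(0;M_\omega,\sigma)\big).\]
   Context: Let $[n]=\{1,\dots,n\}$, $e_1,\dots,e_n$ the standard basis of $\mathbb{Z}^n$; $\varepsilon$ is the empty word, $*$ concatenation. For words $\omega$ over $[n]$ define recursively $a^i_\omega,\delta^i_\omega\in\mathbb{Z}^n$: $a^i_\varepsilon=\delta^i_\varepsilon=e_i$; $a^i_{\omega*j}=a^i_\omega$ if $i\ne j$, $a^j_{\omega*j}=a^j_\omega+\delta^j_\omega$; $\delta^j_{\omega*j}=\delta^j_\omega$, $\delta^i_{\omega*j}=\delta^i_\omega-\delta^j_\omega$ for $i\ne j$. Let $B_\varepsilon=\{0\}$, $B_{\omega*j}=B_\omega+\{0,\delta^j_\omega\}$ (Minkowski sum). Let $M_\omega=(\delta^1_\omega\ \cdots\ \delta^n_\omega)^{-1}$ (inverse of the matrix with columns $\delta^i_\omega$). $\mathrm{Sym}_n$ acts on $\mathbb{Z}^n$ by $\sigma\cdot x=(x_{\sigma^{-1}(i)})_{i\in[n]}$. Let $\le_{\mathrm{lex}}$ be the lexicographic order on $\mathbb{Z}^n$ (comparing first coordinates first), and write $x\le_{\sigma}y$ iff $\sigma x\le_{\mathrm{lex}}\sigma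 y$, and $x<_\sigma y$ iff $\sigma x<_{\mathrm{lex}}\sigma y$. For $P\in\mathbb{Z}^n$, $M\in\mathbb{Z}^{n\times n}_{\ge0}$ with $\det M=1$ and $\sigma\in\mathrm{Sym}_n$, let $L(P;M,\sigma)=\{x\in\mathbb{Z}^n: Mx\le_\sigma MP\}$ and $L^\circ(P;M,\sigma)=\{x\in\mathbb{Z}^n: Mx<_\sigma MP\}$. A subset of $\mathbb{Z}^n$ is regarded as a graph by joining two elements iff their Euclidean distance is $1$; $\mathrm{Comp}_0(X)$ is the connected component of $X$ containing $0$. *)

theory Defs
  imports Complex_Main "HOL-Combinatorics.Permutations"
begin

text \<open>Vectors of Z^n are represented as functions nat => int, indexed by [n] = {1..n},
  vanishing outside {1..n}. Words over [n] are lists of naturals in {1..n}.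
  Matrices are functions nat => nat => int (row, column), indexed by {1..n}.\<close>

definition Zn :: "nat \<Rightarrow> (nat \<Rightarrow> int) set" where
  "Zn n = {x. \<forall>i. i \<notin> {1..n} \<longrightarrow> x i = 0}"

definition unitvec :: "nat \<Rightarrow> nat \<Rightarrow> int" where
  "unitvec i = (\<lambda>k. if k = i then 1 else 0)"

definition ad_step ::
  "(nat \<Rightarrow> nat \<Rightarrow> int) \<times> (nat \<Rightarrow> nat \<Rightarrow> int) \<Rightarrow> nat
   \<Rightarrow> (nat \<Rightarrow> nat \<Rightarrow> int) \<times> (nat \<Rightarrow> nat \<Rightarrow> int)" where
  "ad_step st j = (let a = fst st; d = snd st in
     (\<lambda>i. if i = j then (\<lambda>k. a j k + d j k) else a i,
      \<lambda>i. if i = j then d j else (\<lambda>k. d i k - d j k)))"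

definition ad :: "nat list \<Rightarrow> (nat \<Rightarrow> nat \<Rightarrow> int) \<times> (nat \<Rightarrow> nat \<Rightarrow> int)" where
  "ad w = foldl ad_step (unitvec, unitvec) w"

definition avec :: "nat list \<Rightarrow> nat \<Rightarrow> nat \<Rightarrow> int" where
  "avec w = fst (ad w)"

definition delta :: "nat list \<Rightarrow> nat \<Rightarrow> nat \<Rightarrow> int" where
  "delta w = snd (ad w)"

definition zvec :: "nat \<Rightarrow> int" where "zvec = (\<lambda>k. 0)"

text \<open>B on the reversed word: Brev (rev w) = B_w.\<close>
primrec Brev :: "nat list \<Rightarrow> (nat \<Rightarrow> int) set" where
  "Brev [] = {zvec}"
| "Brev (j # r) = {(\<lambda>k. x k + y k) | x y. x \<in> Brev r \<and> y \<in> {zvec, delta (rev r) j}}"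

definition Bset :: "nat list \<Rightarrow> (nat \<Rightarrow> int) set" where
  "Bset w = Brev (rev w)"

definition inv_mat :: "nat \<Rightarrow> (nat \<Rightarrow> nat \<Rightarrow> int) \<Rightarrow> (nat \<Rightarrow> nat \<Rightarrow> int)" where
  "inv_mat n D = (THE M. (\<forall>i k. i \<notin> {1..n} \<or> k \<notin> {1..n} \<longrightarrow> M i k = 0) \<and>
      (\<forall>i\<in>{1..n}. \<forall>k\<in>{1..n}. (\<Sum>l=1..n. M i l * D l k) = (if i = k then 1 else 0)) \<and>
      (\<forall>i\<in>{1..n}. \<forall>k\<in>{1..n}. (\<Sum>l=1..n. D i l * M l k) = (if i = k then 1 else 0)))"

definition Mmat :: "nat \<Rightarrow> nat list \<Rightarrow> (nat \<Rightarrow> nat \<Rightarrow> int)" where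
  "Mmat n w = inv_mat n (\<lambda>r c. delta w c r)"

definition mv :: "nat \<Rightarrow> (nat \<Rightarrow> nat \<Rightarrow> int) \<Rightarrow> (nat \<Rightarrow> int) \<Rightarrow> (nat \<Rightarrow> int)" where
  "mv n M x = (\<lambda>i. if i \<in> {1..n} then (\<Sum>k=1..n. M i k * x k) else 0)"

definition act :: "(nat \<Rightarrow> nat) \<Rightarrow> (nat \<Rightarrow> int) \<Rightarrow> (nat \<Rightarrow> int)" where
  "act \<sigma> x = (\<lambda>i. x (inv \<sigma> i))"

definition lex_less :: "nat \<Rightarrow> (nat \<Rightarrow> int) \<Rightarrow> (nat \<Rightarrow> int) \<Rightarrow> bool" where
  "lex_less n x y = (\<exists>k\<in>{1..n}. (\<forall>i\<in>{1..<k}. x i = y i) \<and> x k < y k)"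

definition lex_le :: "nat \<Rightarrow> (nat \<Rightarrow> int) \<Rightarrow> (nat \<Rightarrow> int) \<Rightarrow> bool" where
  "lex_le n x y = (lex_less n x y \<or> (\<forall>i\<in>{1..n}. x i = y i))"

definition Lset :: "nat \<Rightarrow> (nat \<Rightarrow> int) \<Rightarrow> (nat \<Rightarrow> nat \<Rightarrow> int) \<Rightarrow> (nat \<Rightarrow> nat) \<Rightarrow> (nat \<Rightarrow> int) set" where
  "Lset n P M \<sigma> = {x \<in> Zn n. lex_le n (act \<sigma> (mv n M x)) (act \<sigma> (mv n M P))}"

definition Lopen :: "nat \<Rightarrow> (nat \<Rightarrow> int) \<Rightarrow> (nat \<Rightarrow> nat \<Rightarrow> int) \<Rightarrow> (nat \<Rightarrow> nat) \<Rightarrow> (nat \<Rightarrow> int) set" where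
  "Lopen n P M \<sigma> = {x \<in> Zn n. lex_less n (act \<sigma> (mv n M x)) (act \<sigma> (mv n M P))}"

definition adj :: "nat \<Rightarrow> (nat \<Rightarrow> int) \<Rightarrow> (nat \<Rightarrow> int) \<Rightarrow> bool" where
  "adj n x y = (sqrt (\<Sum>i=1..n. (real_of_int (x i - y i))\<^sup>2) = 1)"

text \<open>Connected component of X (as a unit-distance graph) containing 0; empty if 0 \<notin> X.\<close>
definition Comp0 :: "nat \<Rightarrow> (nat \<Rightarrow> int) set \<Rightarrow> (nat \<Rightarrow> int) set" where
  "Comp0 n X = {y. zvec \<in> X \<and> y \<in> X \<and> (\<lambda>u v. u \<in> X \<and> v \<in> X \<and> adj n u v)\<^sup>*\<^sup>* zvec y}"

end

theory Submission
  imports Defs "HOL-Library.Function_Algebras"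
begin

text \<open>In the coordinates \<open>y = M\<^sub>\<omega> x\<close> with respect to the basis \<open>\<delta>\<^sup>1\<^sub>\<omega>, \<dots>, \<delta>\<^sup>n\<^sub>\<omega>\<close>, the set \<open>B\<^sub>\<omega>\<close>
  is a connected set of lattice points in the box \<open>0 \<le> y \<le> M\<^sub>\<omega> P\<close>, where \<open>P = a\<^sup>i\<^sub>\<omega> - \<delta>\<^sup>i\<^sub>\<omega>\<close> is
  independent of \<open>i\<close>, and a unit step out of \<open>B\<^sub>\<omega>\<close> leaves the box, either strictly above
  \<open>M\<^sub>\<omega> P\<close> or strictly below \<open>0\<close> (all by induction on \<open>\<omega>\<close>). Since \<open>M\<^sub>\<omega> a\<^sup>j\<^sub>\<omega> = M\<^sub>\<omega> P + e\<^sub>j\<close> and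
  \<open>\<sigma>(j) = n\<close>, the window \<open>L\<^sup>\<circ>(a\<^sup>j\<^sub>\<omega>) \<setminus> L\<^sup>\<circ>(0)\<close> is \<open>0 \<le>\<^sub>\<sigma> y \<le>\<^sub>\<sigma> M\<^sub>\<omega> P\<close>; it contains the box but
  no point outside \<open>B\<^sub>\<omega>\<close> adjacent to it, so \<open>B\<^sub>\<omega>\<close> is its component of \<open>0\<close>.

  Appending \<open>j\<close> replaces the coordinate \<open>y\<^sub>j\<close> by \<open>\<Sigma>\<^sub>i y\<^sub>i\<close>. After \<open>\<sigma>\<close> this is the last coordinate,
  and it only matters when all other coordinates agree, in which case it changes both sides of a
  comparison equally. Hence \<open>L(a\<^sup>j\<^sub>\<omega>; M\<^sub>\<omega>, \<sigma>) \<setminus> L\<^sup>\<circ>(0; M\<^sub>\<omega>, \<sigma>)\<close> is the window for \<open>\<omega>*j\<close>, and the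
  second identity is the first one for \<open>\<omega>*j\<close>.\<close>

section \<open>The vectors \<open>a\<^sub>\<omega>\<close>, \<open>\<delta>\<^sub>\<omega>\<close> and the set \<open>B\<^sub>\<omega>\<close>\<close>

lemma zvec_eq_zero: "zvec = 0"
  by (simp add: zvec_def fun_eq_iff)

text \<open>Simplifying function arithmetic pointwise produces \<open>\<lambda>_. 0\<close>; this folds it back to \<open>0\<close>.\<close>
lemma lambda_zero_eq_zero [simp]: "(\<lambda>_. 0) = (0 :: 'a \<Rightarrow> 'b::zero)"
  by (simp add: zero_fun_def)

lemma ad_snoc: "ad (w @ [l]) = ad_step (ad w) l"
  by (simp add: ad_def)

lemma avec_snoc: "avec (w @ [l]) i = (if i = l then avec w l + delta w l else avec w i)"
  by (simp add: avec_def delta_def ad_snoc ad_step_def Let_def fun_eq_iff)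

lemma delta_snoc: "delta (w @ [l]) i = (if i = l then delta w l else delta w i - delta w l)"
  by (simp add: avec_def delta_def ad_snoc ad_step_def Let_def fun_eq_iff)

lemma avec_Nil: "avec [] i = unitvec i"
  by (simp add: avec_def ad_def)

lemma delta_Nil: "delta [] i = unitvec i"
  by (simp add: delta_def ad_def)

lemma Bset_Nil: "Bset [] = {0}"
  by (simp add: Bset_def zvec_eq_zero)

lemma Bset_snoc: "Bset (w @ [l]) = {x + y | x y. x \<in> Bset w \<and> y \<in> {0, delta w l}}"
  by (simp add: Bset_def zvec_eq_zero plus_fun_def)

lemma mem_Bset_snoc: "q \<in> Bset (w @ [l]) \<longleftrightarrow> q \<in> Bset w \<or> (\<exists>x\<in>Bset w. q = x + delta w l)"
  by (auto simp: Bset_snoc) (metis add.right_neutral)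

lemma Bset_subset_Bset_snoc: "Bset w \<subseteq> Bset (w @ [l])"
  by (auto simp: mem_Bset_snoc)

lemma add_delta_in_Bset_snoc: "x \<in> Bset w \<Longrightarrow> x + delta w l \<in> Bset (w @ [l])"
  by (auto simp: mem_Bset_snoc)

lemma Bset_snocE:
  assumes "q \<in> Bset (w @ [l])"
  obtains "q \<in> Bset w" | x where "x \<in> Bset w" "q = x + delta w l"
  using assms unfolding mem_Bset_snoc by blast

text \<open>The vector \<open>a\<^sup>i\<^sub>\<omega> - \<delta>\<^sup>i\<^sub>\<omega>\<close> does not depend on \<open>i\<close>; it is the vertex of \<open>B\<^sub>\<omega>\<close>
  opposite to \<open>0\<close>.\<close>
definition apex :: "nat list \<Rightarrow> nat \<Rightarrow> int" where
  "apex w = avec w 0 - delta w 0"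

lemma avec_minus_delta_indep: "avec w i - delta w i = avec w i' - delta w i'"
proof (induction w arbitrary: i i' rule: rev_induct)
  case Nil
  then show ?case by (simp add: avec_Nil delta_Nil)
next
  case (snoc l w)
  have indep: "avec w i x - delta w i x = avec w l x - delta w l x" for i x
    using snoc[of i l] by (simp add: fun_eq_iff)
  have "avec (w @ [l]) i x - delta (w @ [l]) i x = avec w l x" for i x
    using indep[of i x] by (simp add: avec_snoc delta_snoc)
  then show ?case by (simp add: fun_eq_iff)
qed

lemma avec_eq_apex_plus_delta: "avec w i = apex w + delta w i"
  using avec_minus_delta_indep[of w i 0] unfolding apex_def by (metis diff_add_cancel)

lemma apex_Nil: "apex [] = 0"
  by (simp add: apex_def avec_Nil delta_Nil)

lemma apex_snoc: "apex (w @ [l]) = apex w + delta w l"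
  using avec_eq_apex_plus_delta[of "w @ [l]" l] avec_eq_apex_plus_delta[of w l]
  by (simp add: avec_snoc delta_snoc add.commute)

lemma zero_in_Bset: "0 \<in> Bset w"
  by (induction w rule: rev_induct) (auto simp: Bset_Nil mem_Bset_snoc)

lemma apex_in_Bset: "apex w \<in> Bset w"
proof (induction w rule: rev_induct)
  case Nil
  then show ?case by (simp add: apex_Nil Bset_Nil)
next
  case (snoc m w)
  then show ?case unfolding mem_Bset_snoc apex_snoc by blast
qed

lemma avec_minus_unitvec_in_Bset: "avec w l - unitvec l \<in> Bset w"
proof (induction w arbitrary: l rule: rev_induct)
  case Nil
  then show ?case by (simp add: avec_Nil Bset_Nil)
next
  case (snoc m w)
  show ?case
  proof (cases "l = m")
    case True
    then have "avec (w @ [m]) l - unitvec l = (avec w m - unitvec m) + delta w m"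
      by (simp add: avec_snoc fun_eq_iff)
    then show ?thesis using snoc[of m] unfolding mem_Bset_snoc by blast
  next
    case False
    then show ?thesis using snoc[of l] by (simp add: mem_Bset_snoc avec_snoc)
  qed
qed

lemma Zn_add: "x \<in> Zn n \<Longrightarrow> y \<in> Zn n \<Longrightarrow> x + y \<in> Zn n"
  by (simp add: Zn_def)

lemma Zn_diff: "x \<in> Zn n \<Longrightarrow> y \<in> Zn n \<Longrightarrow> x - y \<in> Zn n"
  by (simp add: Zn_def)

lemma zero_in_Zn: "0 \<in> Zn n"
  by (simp add: Zn_def)

lemma unitvec_in_Zn: "k \<in> {1..n} \<Longrightarrow> unitvec k \<in> Zn n"
  by (auto simp: Zn_def unitvec_def)

lemma delta_in_Zn: "set w \<subseteq> {1..n} \<Longrightarrow> k \<in> {1..n} \<Longrightarrow> delta w k \<in> Zn n"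
  by (induction w arbitrary: k rule: rev_induct) (auto simp: delta_Nil delta_snoc
      unitvec_in_Zn Zn_diff)

lemma Bset_subset_Zn: "set w \<subseteq> {1..n} \<Longrightarrow> Bset w \<subseteq> Zn n"
proof (induction w rule: rev_induct)
  case Nil
  then show ?case by (simp add: Bset_Nil zero_in_Zn)
next
  case (snoc m w)
  then have "Bset w \<subseteq> Zn n" and "delta w m \<in> Zn n"
    by (auto intro!: delta_in_Zn)
  then show ?case by (auto simp: mem_Bset_snoc intro!: Zn_add)
qed

section \<open>Coordinates with respect to the basis \<open>\<delta>\<^sub>\<omega>\<close>\<close>

text \<open>Appending \<open>l\<close> to \<open>\<omega>\<close> replaces \<open>\<delta>\<^sup>i\<close> by \<open>\<delta>\<^sup>i - \<delta>\<^sup>l\<close> for \<open>i \<noteq> l\<close>, so in coordinates it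
  replaces the \<open>l\<close>-th coordinate by the sum of all coordinates (\<open>gather\<close>). Iterating this on
  the identity matrix gives the coordinate matrix \<open>M\<^sub>\<omega>\<close>.\<close>

definition gather :: "nat \<Rightarrow> nat \<Rightarrow> (nat \<Rightarrow> int) \<Rightarrow> nat \<Rightarrow> int" where
  "gather n l y = (\<lambda>i. if i = l then (\<Sum>m=1..n. y m) else y i)"

definition coord_step :: "nat \<Rightarrow> (nat \<Rightarrow> nat \<Rightarrow> int) \<Rightarrow> nat \<Rightarrow> nat \<Rightarrow> nat \<Rightarrow> int" where
  "coord_step n R l = (\<lambda>i k. if i = l then (\<Sum>m=1..n. R m k) else R i k)"

definition coord_mat :: "nat \<Rightarrow> nat list \<Rightarrow> nat \<Rightarrow> nat \<Rightarrow> int" where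
  "coord_mat n w = foldl (coord_step n) (\<lambda>i k. if i = k then 1 else 0) w"

definition coords :: "nat \<Rightarrow> nat list \<Rightarrow> (nat \<Rightarrow> int) \<Rightarrow> nat \<Rightarrow> int" where
  "coords n w = mv n (coord_mat n w)"

lemma coord_mat_Nil: "coord_mat n [] = (\<lambda>i k. if i = k then 1 else 0)"
  by (simp add: coord_mat_def)

lemma coord_mat_snoc: "coord_mat n (w @ [l]) = coord_step n (coord_mat n w) l"
  by (simp add: coord_mat_def)

lemma mv_add: "mv n M (x + y) = mv n M x + mv n M y"
  by (simp add: mv_def fun_eq_iff distrib_left sum.distrib)

lemma mv_diff: "mv n M (x - y) = mv n M x - mv n M y"
  by (simp add: mv_def fun_eq_iff right_diff_distrib sum_subtractf)

lemma mv_zero: "mv n M 0 = 0"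
  by (simp add: mv_def fun_eq_iff)

lemma coords_add: "coords n w (x + y) = coords n w x + coords n w y"
  by (simp add: coords_def mv_add)

lemma coords_diff: "coords n w (x - y) = coords n w x - coords n w y"
  by (simp add: coords_def mv_diff)

lemma coords_zero: "coords n w 0 = 0"
  by (simp add: coords_def mv_zero)

lemma gather_diff: "gather n l (x - y) = gather n l x - gather n l y"
  by (simp add: gather_def fun_eq_iff sum_subtractf)

lemma gather_uminus: "gather n l (- y) = - gather n l y"
  by (simp add: gather_def fun_eq_iff sum_negf)

lemma sum_unitvec: "k \<in> {1..n} \<Longrightarrow> (\<Sum>m=1..n. unitvec k m) = 1"
  by (simp add: unitvec_def sum.delta')

lemma coords_snoc:
  assumes "l \<in> {1..n}"
  shows "coords n (w @ [l]) x = gather n l (coords n w x)"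
proof
  fix i
  have "(\<Sum>k=1..n. (\<Sum>m=1..n. coord_mat n w m k) * x k) = (\<Sum>m=1..n. \<Sum>k=1..n. coord_mat n w m k * x k)"
    by (simp add: sum_distrib_right) (rule sum.swap)
  then show "coords n (w @ [l]) x i = gather n l (coords n w x) i"
    using assms by (auto simp: coords_def mv_def gather_def coord_mat_snoc coord_step_def)
qed

lemma coords_delta:
  assumes "set w \<subseteq> {1..n}" and "k \<in> {1..n}"
  shows "coords n w (delta w k) = unitvec k"
  using assms
proof (induction w arbitrary: k rule: rev_induct)
  case Nil
  then show ?case
    by (auto simp: coords_def mv_def coord_mat_Nil delta_Nil unitvec_def fun_eq_iff
        of_bool_def[symmetric])
next
  case (snoc l w)
  have l: "l \<in> {1..n}" and w: "set w \<subseteq> {1..n}" using snoc.prems by auto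
  note IH = snoc.IH[OF w]
  show ?case
  proof (cases "k = l")
    case True
    then show ?thesis
      using sum_unitvec[OF l]
      by (simp add: coords_snoc[OF l] delta_snoc IH[OF l] gather_def unitvec_def fun_eq_iff)
  next
    case False
    then have "coords n (w @ [l]) (delta (w @ [l]) k) = gather n l (unitvec k - unitvec l)"
      by (simp only: coords_snoc[OF l] delta_snoc if_False coords_diff gather_diff IH[OF l]
          IH[OF snoc.prems(2)])
    then show ?thesis
      using False sum_unitvec[OF l] sum_unitvec[OF snoc.prems(2)]
      by (auto simp: gather_def unitvec_def fun_eq_iff sum_subtractf)
  qed
qed

lemma coord_mat_delta_inverse:
  assumes "set w \<subseteq> {1..n}" and "i \<in> {1..n}" and "k \<in> {1..n}"
  shows "(\<Sum>l=1..n. coord_mat n w i l * delta w k l) = (if i = k then 1 else 0)"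
proof -
  have "(\<Sum>l=1..n. coord_mat n w i l * delta w k l) = coords n w (delta w k) i"
    using assms(2) by (simp add: coords_def mv_def)
  then show ?thesis using coords_delta[OF assms(1,3)] by (simp add: unitvec_def)
qed

lemma delta_coord_mat_inverse:
  assumes "set w \<subseteq> {1..n}" and "i \<in> {1..n}" and "k \<in> {1..n}"
  shows "(\<Sum>l=1..n. delta w l i * coord_mat n w l k) = (if i = k then 1 else 0)"
  using assms
proof (induction w rule: rev_induct)
  case Nil
  then show ?case by (simp add: delta_Nil coord_mat_Nil unitvec_def of_bool_def[symmetric])
next
  case (snoc m w)
  have m: "m \<in> {1..n}" using snoc.prems by auto
  let ?I = "{1..n} - {m}" and ?R = "coord_mat n w"
  have "(\<Sum>l=1..n. delta (w @ [m]) l i * coord_mat n (w @ [m]) l k)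
      = delta w m i * (\<Sum>l=1..n. ?R l k) + (\<Sum>l\<in>?I. (delta w l i - delta w m i) * ?R l k)"
    using m by (simp add: sum.remove delta_snoc coord_mat_snoc coord_step_def)
  also have "\<dots> = delta w m i * ?R m k + (\<Sum>l\<in>?I. delta w l i * ?R l k)"
    using m by (simp add: sum.remove sum_subtractf sum_distrib_left algebra_simps)
  also have "\<dots> = (\<Sum>l=1..n. delta w l i * ?R l k)"
    using m by (simp add: sum.remove)
  finally show ?case using snoc by simp
qed

lemma left_inverse_eq_right_inverse:
  fixes M D R :: "nat \<Rightarrow> nat \<Rightarrow> 'a::comm_ring_1"
  assumes "finite I" and i: "i \<in> I" and k: "k \<in> I"
    and MD: "\<And>i k. i \<in> I \<Longrightarrow> k \<in> I \<Longrightarrow> (\<Sum>l\<in>I. M i l * D l k) = (if i = k then 1 else 0)"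
    and DR: "\<And>i k. i \<in> I \<Longrightarrow> k \<in> I \<Longrightarrow> (\<Sum>l\<in>I. D i l * R l k) = (if i = k then 1 else 0)"
  shows "M i k = R i k"
proof -
  have "M i k = (\<Sum>l\<in>I. M i l * (if l = k then 1 else 0))"
    using assms(1) k by (simp add: of_bool_def[symmetric])
  also have "\<dots> = (\<Sum>l\<in>I. M i l * (\<Sum>m\<in>I. D l m * R m k))"
    using DR k by (intro sum.cong) simp_all
  also have "\<dots> = (\<Sum>l\<in>I. \<Sum>m\<in>I. M i l * D l m * R m k)"
    by (simp add: sum_distrib_left mult.assoc)
  also have "\<dots> = (\<Sum>m\<in>I. (\<Sum>l\<in>I. M i l * D l m) * R m k)"
    by (subst sum.swap) (simp add: sum_distrib_right)
  also have "\<dots> = R i k"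
    using MD i assms(1) by (simp add: of_bool_def[symmetric])
  finally show ?thesis .
qed

lemma Mmat_eq_coord_mat:
  assumes w: "set w \<subseteq> {1..n}"
  shows "Mmat n w = (\<lambda>i k. if i \<in> {1..n} \<and> k \<in> {1..n} then coord_mat n w i k else 0)"
    (is "_ = ?R")
proof -
  have RD: "(\<Sum>l=1..n. ?R i l * delta w k l) = (if i = k then 1 else 0)"
    if "i \<in> {1..n}" "k \<in> {1..n}" for i k
  proof -
    have "(\<Sum>l=1..n. ?R i l * delta w k l) = (\<Sum>l=1..n. coord_mat n w i l * delta w k l)"
      using that by (intro sum.cong) simp_all
    then show ?thesis using coord_mat_delta_inverse[OF w that] by simp
  qed
  have DR: "(\<Sum>l=1..n. delta w l i * ?R l k) = (if i = k then 1 else 0)"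
    if "i \<in> {1..n}" "k \<in> {1..n}" for i k
  proof -
    have "(\<Sum>l=1..n. delta w l i * ?R l k) = (\<Sum>l=1..n. delta w l i * coord_mat n w l k)"
      using that by (intro sum.cong) simp_all
    then show ?thesis using delta_coord_mat_inverse[OF w that] by simp
  qed
  show ?thesis
    unfolding Mmat_def inv_mat_def
  proof (rule the_equality)
    fix M
    assume "(\<forall>i k. i \<notin> {1..n} \<or> k \<notin> {1..n} \<longrightarrow> M i k = 0) \<and>
      (\<forall>i\<in>{1..n}. \<forall>k\<in>{1..n}. (\<Sum>l = 1..n. M i l * delta w k l) = (if i = k then 1 else 0)) \<and>
      (\<forall>i\<in>{1..n}. \<forall>k\<in>{1..n}. (\<Sum>l = 1..n. delta w l i * M l k) = (if i = k then 1 else 0))"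
    then show "M = ?R"
      using left_inverse_eq_right_inverse[of "{1..n}" _ _ M "\<lambda>r c. delta w c r" ?R] DR
      by (auto simp: fun_eq_iff)
  qed (use RD DR in auto)
qed

lemma mv_Mmat: "set w \<subseteq> {1..n} \<Longrightarrow> mv n (Mmat n w) = coords n w"
  by (auto simp: Mmat_eq_coord_mat coords_def mv_def fun_eq_iff intro!: sum.cong)

lemma delta_expansion:
  assumes w: "set w \<subseteq> {1..n}" and i: "i \<in> {1..n}"
  shows "x i = (\<Sum>l=1..n. delta w l i * coords n w x l)"
proof -
  have "(\<Sum>l=1..n. delta w l i * coords n w x l)
      = (\<Sum>l=1..n. \<Sum>k=1..n. delta w l i * coord_mat n w l k * x k)"
    by (simp add: coords_def mv_def sum_distrib_left mult.assoc)
  also have "\<dots> = (\<Sum>k=1..n. (\<Sum>l=1..n. delta w l i * coord_mat n w l k) * x k)"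
    by (subst sum.swap) (simp add: sum_distrib_right)
  also have "\<dots> = x i"
    using delta_coord_mat_inverse[OF w i] i by (simp add: of_bool_def[symmetric])
  finally show ?thesis by simp
qed

lemma coords_inj_on:
  assumes "set w \<subseteq> {1..n}" and "x \<in> Zn n" and "y \<in> Zn n"
    and "\<forall>i\<in>{1..n}. coords n w x i = coords n w y i"
  shows "x = y"
proof
  fix i
  show "x i = y i"
    using assms delta_expansion[OF assms(1), of i x] delta_expansion[OF assms(1), of i y]
    by (cases "i \<in> {1..n}") (simp_all add: Zn_def)
qed

definition nonneg_vec :: "nat \<Rightarrow> (nat \<Rightarrow> int) \<Rightarrow> bool" where
  "nonneg_vec n y \<longleftrightarrow> (\<forall>i\<in>{1..n}. 0 \<le> y i)"

definition pos_vec :: "nat \<Rightarrow> (nat \<Rightarrow> int) \<Rightarrow> bool" where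
  "pos_vec n y \<longleftrightarrow> nonneg_vec n y \<and> (\<exists>i\<in>{1..n}. 0 < y i)"

definition neg_vec :: "nat \<Rightarrow> (nat \<Rightarrow> int) \<Rightarrow> bool" where
  "neg_vec n y \<longleftrightarrow> pos_vec n (- y)"

lemma pos_vec_iff: "pos_vec n y \<longleftrightarrow> nonneg_vec n y \<and> \<not> (\<forall>i\<in>{1..n}. y i = 0)"
  by (auto simp: pos_vec_def nonneg_vec_def order.strict_iff_order)

lemma nonneg_vec_add: "nonneg_vec n x \<Longrightarrow> nonneg_vec n y \<Longrightarrow> nonneg_vec n (x + y)"
  by (simp add: nonneg_vec_def)

lemma nonneg_vec_unitvec: "nonneg_vec n (unitvec k)"
  by (simp add: nonneg_vec_def unitvec_def)

lemma nonneg_vec_gather: "nonneg_vec n y \<Longrightarrow> nonneg_vec n (gather n l y)"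
  by (auto simp: nonneg_vec_def gather_def intro!: sum_nonneg)

lemma pos_vec_sum_pos:
  assumes "pos_vec n u"
  shows "0 < (\<Sum>m=1..n. u m)"
proof -
  obtain i where i: "i \<in> {1..n}" "0 < u i" and nonneg: "\<forall>m\<in>{1..n}. 0 \<le> u m"
    using assms by (auto simp: pos_vec_def nonneg_vec_def)
  have "u i \<le> (\<Sum>m=1..n. u m)" by (rule member_le_sum) (use i nonneg in auto)
  with i show ?thesis by simp
qed

lemma pos_vec_gather:
  assumes "l \<in> {1..n}" and "pos_vec n u"
  shows "pos_vec n (gather n l u)"
proof -
  have "nonneg_vec n (gather n l u)" using assms(2) by (simp add: pos_vec_def nonneg_vec_gather)
  moreover have "0 < gather n l u l" using pos_vec_sum_pos[OF assms(2)] by (simp add: gather_def)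
  ultimately show ?thesis using assms(1) by (auto simp: pos_vec_def)
qed

text \<open>Subtracting \<open>e\<^sub>l\<close> before gathering keeps a positive vector positive unless it was \<open>e\<^sub>l\<close>:
  the gathered coordinate is \<open>\<Sum>u - 1 \<ge> 0\<close>, and it vanishes together with the others only
  for \<open>u = e\<^sub>l\<close>.\<close>
lemma pos_vec_gather_minus_unitvec:
  assumes l: "l \<in> {1..n}" and u: "pos_vec n u"
  shows "(\<forall>i\<in>{1..n}. u i = unitvec l i) \<or> pos_vec n (gather n l (u - unitvec l))"
proof -
  let ?v = "gather n l (u - unitvec l)"
  have nonneg: "\<forall>m\<in>{1..n}. 0 \<le> u m" using u by (simp add: pos_vec_def nonneg_vec_def)
  have v_l: "?v l = (\<Sum>m=1..n. u m) - 1"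
    using sum_unitvec[OF l] by (simp add: gather_def sum_subtractf)
  have v_other: "?v i = u i" if "i \<noteq> l" for i
    using that by (simp add: gather_def unitvec_def)
  have "0 \<le> ?v i" if "i \<in> {1..n}" for i
    using pos_vec_sum_pos[OF u] nonneg v_l v_other[of i] that by (cases "i = l") auto
  then have "nonneg_vec n ?v" by (simp add: nonneg_vec_def)
  moreover have "\<forall>i\<in>{1..n}. u i = unitvec l i" if zero: "\<forall>i\<in>{1..n}. ?v i = 0"
  proof -
    have others: "\<forall>i\<in>{1..n} - {l}. u i = 0" using zero v_other by (metis DiffE insertI1)
    have "(\<Sum>m=1..n. u m) = u l + (\<Sum>m\<in>{1..n} - {l}. u m)"
      using l by (simp add: sum.remove)
    then have "u l = 1" using others zero v_l l by simp
    then show ?thesis using others by (auto simp: unitvec_def)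
  qed
  ultimately show ?thesis by (auto simp: pos_vec_iff)
qed

lemma neg_vec_gather: "l \<in> {1..n} \<Longrightarrow> neg_vec n v \<Longrightarrow> neg_vec n (gather n l v)"
  using pos_vec_gather[of l n "- v"] by (simp add: neg_vec_def gather_uminus)

lemma neg_vec_gather_plus_unitvec:
  assumes "l \<in> {1..n}" and "neg_vec n v"
  shows "(\<forall>i\<in>{1..n}. v i = - unitvec l i) \<or> neg_vec n (gather n l (v + unitvec l))"
proof -
  have "- v - unitvec l = - (v + unitvec l)" by simp
  then have "gather n l (- v - unitvec l) = - gather n l (v + unitvec l)"
    by (simp only: gather_uminus)
  moreover have "(\<forall>i\<in>{1..n}. (- v) i = unitvec l i) \<longleftrightarrow> (\<forall>i\<in>{1..n}. v i = - unitvec l i)"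
    by auto
  ultimately show ?thesis
    using pos_vec_gather_minus_unitvec[of l n "- v"] assms unfolding neg_vec_def by metis
qed

section \<open>The permutation action and the lexicographic order\<close>

lemma act_add: "act \<sigma> (x + y) = act \<sigma> x + act \<sigma> y"
  by (simp add: act_def fun_eq_iff)

lemma act_diff: "act \<sigma> (x - y) = act \<sigma> x - act \<sigma> y"
  by (simp add: act_def fun_eq_iff)

lemma act_uminus: "act \<sigma> (- x) = - act \<sigma> x"
  by (simp add: act_def fun_eq_iff)

lemma act_zero: "act \<sigma> 0 = 0"
  by (simp add: act_def fun_eq_iff)

lemma act_unitvec: "bij \<sigma> \<Longrightarrow> act \<sigma> (unitvec j) = unitvec (\<sigma> j)"
  by (simp add: act_def unitvec_def fun_eq_iff) (metis bij_inv_eq_iff)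

lemma nonneg_vec_act: "\<sigma> permutes {1..n} \<Longrightarrow> nonneg_vec n y \<Longrightarrow> nonneg_vec n (act \<sigma> y)"
  using permutes_in_image[OF permutes_inv] by (fastforce simp: nonneg_vec_def act_def)

lemma pos_vec_act:
  assumes \<sigma>: "\<sigma> permutes {1..n}" and y: "pos_vec n y"
  shows "pos_vec n (act \<sigma> y)"
proof -
  obtain i where "i \<in> {1..n}" "0 < y i" using y by (auto simp: pos_vec_def)
  moreover have "act \<sigma> y (\<sigma> i) = y i" by (simp add: act_def permutes_inverses(2)[OF \<sigma>])
  ultimately show ?thesis
    using nonneg_vec_act[OF \<sigma>] y permutes_in_image[OF \<sigma>] unfolding pos_vec_def by metis
qed

lemma neg_vec_act: "\<sigma> permutes {1..n} \<Longrightarrow> neg_vec n y \<Longrightarrow> neg_vec n (act \<sigma> y)"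
  by (simp add: neg_vec_def pos_vec_act flip: act_uminus)

lemma lex_less_of_pos_vec_diff:
  assumes "pos_vec n (y - z)"
  shows "lex_less n z y"
proof -
  have le: "\<forall>i\<in>{1..n}. z i \<le> y i" and "\<exists>i\<in>{1..n}. z i \<noteq> y i"
    using assms by (auto simp: pos_vec_def nonneg_vec_def dest: less_imp_neq)
  then obtain k where k: "k \<in> {1..n}" "z k \<noteq> y k"
    and least: "\<And>m. m < k \<Longrightarrow> \<not> (m \<in> {1..n} \<and> z m \<noteq> y m)"
    using exists_least_iff[of "\<lambda>i. i \<in> {1..n} \<and> z i \<noteq> y i"] by blast
  have "\<forall>i\<in>{1..<k}. z i = y i" using least k by fastforce
  moreover have "z k < y k" using le k by force
  ultimately show ?thesis using k(1) unfolding lex_less_def by blast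
qed

lemma lex_le_of_nonneg_vec_diff: "nonneg_vec n (y - z) \<Longrightarrow> lex_le n z y"
  using lex_less_of_pos_vec_diff[of n y z] unfolding lex_le_def pos_vec_iff by fastforce

lemma lex_less_zero_of_neg_vec: "neg_vec n y \<Longrightarrow> lex_less n y 0"
  using lex_less_of_pos_vec_diff[of n 0 y] by (simp add: neg_vec_def)

lemma lex_le_not_less: "lex_le n x y \<Longrightarrow> \<not> lex_less n y x"
  unfolding lex_le_def lex_less_def
  by (metis atLeastAtMost_iff atLeastLessThan_iff linorder_neqE_nat less_asym
      order.strict_trans2 order_refl)

lemma lex_le_iff_lex_less_plus_unitvec:
  assumes "1 \<le> n"
  shows "lex_le n y z \<longleftrightarrow> lex_less n y (z + unitvec n)"
proof
  assume "lex_le n y z"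
  then consider k where "k \<in> {1..n}" "\<forall>i\<in>{1..<k}. y i = z i" "y k < z k"
    | "\<forall>i\<in>{1..n}. y i = z i"
    unfolding lex_le_def lex_less_def by blast
  then show "lex_less n y (z + unitvec n)"
  proof cases
    case 1
    then show ?thesis unfolding lex_less_def by (auto simp: unitvec_def intro!: bexI[of _ k])
  next
    case 2
    then show ?thesis using assms unfolding lex_less_def
      by (auto simp: unitvec_def intro!: bexI[of _ n])
  qed
next
  assume "lex_less n y (z + unitvec n)"
  then obtain k where k: "k \<in> {1..n}" "\<forall>i\<in>{1..<k}. y i = z i" "y k < z k + unitvec n k"
    unfolding lex_less_def by (auto simp: unitvec_def)
  show "lex_le n y z"
  proof (cases "y k < z k")
    case True
    then show ?thesis using k unfolding lex_le_def lex_less_def by blast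
  next
    case False
    then have "k = n" "y n = z n" using k by (auto simp: unitvec_def split: if_splits)
    then show ?thesis using k unfolding lex_le_def
      by (metis atLeastAtMost_iff atLeastLessThan_iff le_neq_implies_less)
  qed
qed

lemma lex_less_iff_diff: "lex_less n y z \<longleftrightarrow> lex_less n (y - z) 0"
  by (simp add: lex_less_def)

lemma lex_less_zero_cong:
  assumes "\<forall>i\<in>{1..<n}. y' i = y i" and "(\<forall>i\<in>{1..<n}. y i = 0) \<Longrightarrow> y' n = y n"
  shows "lex_less n y' 0 \<longleftrightarrow> lex_less n y 0"
proof -
  have "(\<forall>i\<in>{1..<k}. y' i = 0) \<and> y' k < 0 \<longleftrightarrow> (\<forall>i\<in>{1..<k}. y i = 0) \<and> y k < 0"
    if "k \<in> {1..n}" for k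
    using assms that by (cases "k = n") auto
  then show ?thesis unfolding lex_less_def by simp
qed

section \<open>The unit-distance graph on \<open>\<int>\<^sup>n\<close>\<close>

lemma adj_add_unitvec:
  assumes "k \<in> {1..n}"
  shows "adj n x (x + unitvec k)"
proof -
  have "(\<Sum>i=1..n. (real_of_int (x i - (x + unitvec k) i))\<^sup>2) = (\<Sum>i=1..n. if i = k then 1 else 0)"
    by (rule sum.cong) (auto simp: unitvec_def)
  then show ?thesis using assms by (simp add: adj_def)
qed

lemma adj_commute: "adj n x y \<longleftrightarrow> adj n y x"
  by (simp add: adj_def power2_commute)

lemma adj_shift: "adj n (x + c) (y + c) \<longleftrightarrow> adj n x y"
  by (simp add: adj_def)

lemma int_sum_squares_eq_1:
  fixes d :: "nat \<Rightarrow> int"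
  assumes I: "finite I" and sum1: "(\<Sum>i\<in>I. (d i)\<^sup>2) = 1"
  obtains k where "k \<in> I" "d k = 1 \<or> d k = -1" "\<forall>i\<in>I - {k}. d i = 0"
proof -
  obtain k where k: "k \<in> I" "d k \<noteq> 0"
    using sum1 by (metis (mono_tags, lifting) power_zero_numeral sum.neutral zero_neq_one)
  have split: "(\<Sum>i\<in>I. (d i)\<^sup>2) = (d k)\<^sup>2 + (\<Sum>i\<in>I - {k}. (d i)\<^sup>2)"
    using I k(1) by (simp add: sum.remove)
  have "1 \<le> (d k)\<^sup>2" using k(2) by (simp add: int_one_le_iff_zero_less)
  moreover have "0 \<le> (\<Sum>i\<in>I - {k}. (d i)\<^sup>2)" by (simp add: sum_nonneg)
  ultimately have "(d k)\<^sup>2 = 1" and rest: "(\<Sum>i\<in>I - {k}. (d i)\<^sup>2) = 0"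
    using sum1 split by linarith+
  then show ?thesis
    using that k(1) I by (simp add: power2_eq_1_iff sum_nonneg_eq_0_iff)
qed

lemma adj_Zn_cases:
  assumes "x \<in> Zn n" and "y \<in> Zn n" and "adj n x y"
  obtains k where "k \<in> {1..n}" and "y = x + unitvec k \<or> x = y + unitvec k"
proof -
  have "real_of_int (\<Sum>i=1..n. (x i - y i)\<^sup>2) = (\<Sum>i=1..n. (real_of_int (x i - y i))\<^sup>2)"
    by simp
  then have "(\<Sum>i=1..n. (x i - y i)\<^sup>2) = 1"
    using assms(3) unfolding adj_def by (metis of_int_eq_1_iff real_sqrt_eq_1_iff)
  then obtain k where k: "k \<in> {1..n}" "x k - y k = 1 \<or> x k - y k = -1"
    and others: "\<forall>i\<in>{1..n} - {k}. x i - y i = 0"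
    using int_sum_squares_eq_1[of "{1..n}" "\<lambda>i. x i - y i"] by blast
  have "x i = y i" if "i \<noteq> k" for i
    using others assms(1,2) that by (cases "i \<in> {1..n}") (auto simp: Zn_def)
  then have "y = x + unitvec k \<or> x = y + unitvec k"
    using k(2) by (auto simp: fun_eq_iff unitvec_def)
  with k(1) show ?thesis by (rule that)
qed

definition reach :: "nat \<Rightarrow> (nat \<Rightarrow> int) set \<Rightarrow> (nat \<Rightarrow> int) \<Rightarrow> (nat \<Rightarrow> int) \<Rightarrow> bool" where
  "reach n X = (\<lambda>u v. u \<in> X \<and> v \<in> X \<and> adj n u v)\<^sup>*\<^sup>*"

lemma reach_refl: "reach n X u u"
  by (simp add: reach_def)

lemma reach_step: "u \<in> X \<Longrightarrow> v \<in> X \<Longrightarrow> adj n u v \<Longrightarrow> reach n X u v"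
  by (simp add: reach_def r_into_rtranclp)

lemma reach_trans: "reach n X u v \<Longrightarrow> reach n X v z \<Longrightarrow> reach n X u z"
  unfolding reach_def by (rule rtranclp_trans)

lemma reach_sym: "reach n X u v \<Longrightarrow> reach n X v u"
  unfolding reach_def
  by (rule sympD[OF symp_rtranclp]) (auto simp: symp_def adj_commute)

lemma reach_mono: "X \<subseteq> Y \<Longrightarrow> reach n X u v \<Longrightarrow> reach n Y u v"
  unfolding reach_def by (erule rtranclp_mono[THEN predicate2D, rotated]) auto

lemma reach_shift:
  assumes "\<forall>x\<in>X. x + c \<in> Y" and "reach n X u v"
  shows "reach n Y (u + c) (v + c)"
  using assms(2) unfolding reach_def
proof (induction rule: rtranclp_induct)
  case (step y z)
  then have "y + c \<in> Y" "z + c \<in> Y" "adj n (y + c) (z + c)"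
    using assms(1) by (simp_all add: adj_shift)
  then show ?case by (blast intro: rtranclp.rtrancl_into_rtrancl[OF step.IH])
qed simp

lemma Comp0_eq_if_closed:
  assumes "0 \<in> B" and "B \<subseteq> X" and connected: "\<And>q. q \<in> B \<Longrightarrow> reach n B 0 q"
    and closed: "\<And>u v. u \<in> B \<Longrightarrow> v \<in> X \<Longrightarrow> adj n u v \<Longrightarrow> v \<in> B"
  shows "Comp0 n X = B"
proof
  show "B \<subseteq> Comp0 n X"
    using assms reach_mono[OF assms(2) connected] by (auto simp: Comp0_def reach_def zvec_eq_zero)
next
  show "Comp0 n X \<subseteq> B"
  proof
    fix y
    assume "y \<in> Comp0 n X"
    then have "(\<lambda>u v. u \<in> X \<and> v \<in> X \<and> adj n u v)\<^sup>*\<^sup>* 0 y"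
      by (simp add: Comp0_def zvec_eq_zero)
    then show "y \<in> B"
      by (induction rule: rtranclp_induct) (use assms(1) closed in auto)
  qed
qed

lemma coords_add_delta:
  "set w \<subseteq> {1..n} \<Longrightarrow> l \<in> {1..n} \<Longrightarrow> coords n w (x + delta w l) = coords n w x + unitvec l"
  by (simp add: coords_add coords_delta)

lemma eq_add_delta_of_coords:
  assumes w: "set w \<subseteq> {1..n}" and l: "l \<in> {1..n}" and "y \<in> Zn n" and "z \<in> Zn n"
    and "\<forall>i\<in>{1..n}. coords n w y i = coords n w z i + unitvec l i"
  shows "y = z + delta w l"
proof (rule coords_inj_on[OF w])
  show "z + delta w l \<in> Zn n" using assms(4) delta_in_Zn[OF w l] by (rule Zn_add)
qed (use assms in \<open>simp_all add: coords_add_delta[OF w l]\<close>)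

lemma coords_Nil_unitvec: "k \<in> {1..n} \<Longrightarrow> coords n [] (unitvec k) = unitvec k"
  using coords_delta[of "[]" n k] by (simp add: delta_Nil)

lemma coords_apex_snoc:
  assumes "set w \<subseteq> {1..n}" and "l \<in> {1..n}"
  shows "coords n (w @ [l]) (apex (w @ [l])) = gather n l (coords n w (apex w) + unitvec l)"
  using assms by (simp add: coords_snoc apex_snoc coords_add_delta)

lemma Bset_in_box:
  assumes "set w \<subseteq> {1..n}" and "q \<in> Bset w"
  shows "nonneg_vec n (coords n w q) \<and> nonneg_vec n (coords n w (apex w) - coords n w q)"
  using assms
proof (induction w arbitrary: q rule: rev_induct)
  case Nil
  then show ?case by (simp add: Bset_Nil coords_zero apex_Nil nonneg_vec_def)
next
  case (snoc l w)
  have l: "l \<in> {1..n}" and w: "set w \<subseteq> {1..n}" using snoc.prems by auto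
  let ?C = "coords n w" and ?P = "coords n w (apex w)"
  from snoc.prems(2) show ?case
  proof (cases rule: Bset_snocE)
    case 1
    have eq: "coords n (w @ [l]) (apex (w @ [l])) - coords n (w @ [l]) q
        = gather n l ((?P - ?C q) + unitvec l)"
      unfolding coords_apex_snoc[OF w l]
      by (simp add: coords_snoc[OF l] algebra_simps flip: gather_diff)
    show ?thesis
      using snoc.IH[OF w 1] unfolding eq unfolding coords_snoc[OF l]
      by (intro conjI nonneg_vec_gather nonneg_vec_add nonneg_vec_unitvec) blast+
  next
    case (2 x)
    have "coords n (w @ [l]) q = gather n l (?C x + unitvec l)"
      by (simp add: 2(2) coords_snoc[OF l] coords_add_delta[OF w l])
    moreover have "coords n (w @ [l]) (apex (w @ [l])) - coords n (w @ [l]) q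
        = gather n l (?P - ?C x)"
      unfolding calculation coords_apex_snoc[OF w l] by (simp flip: gather_diff)
    ultimately show ?thesis
      using snoc.IH[OF w 2(1)] by (metis nonneg_vec_gather nonneg_vec_add nonneg_vec_unitvec)
  qed
qed

lemma Bset_step_up:
  assumes "set w \<subseteq> {1..n}" and "q \<in> Bset w" and "k \<in> {1..n}"
  shows "q + unitvec k \<in> Bset w \<or> pos_vec n (coords n w (q + unitvec k) - coords n w (apex w))"
  using assms
proof (induction w arbitrary: q rule: rev_induct)
  case Nil
  then have "pos_vec n (unitvec k)" by (auto simp: pos_vec_def nonneg_vec_def unitvec_def)
  then show ?case using Nil by (simp add: Bset_Nil apex_Nil coords_zero coords_Nil_unitvec)
next
  case (snoc l w)
  have l: "l \<in> {1..n}" and w: "set w \<subseteq> {1..n}" and k: "k \<in> {1..n}" using snoc.prems by auto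
  let ?C = "coords n w" and ?P = "coords n w (apex w)"
  let ?C' = "coords n (w @ [l])" and ?P' = "coords n (w @ [l]) (apex (w @ [l]))"
  from snoc.prems(2) show ?case
  proof (cases rule: Bset_snocE)
    case 1
    from snoc.IH[OF w 1 k] show ?thesis
    proof
      assume u: "pos_vec n (?C (q + unitvec k) - ?P)"
      have eq: "?C' (q + unitvec k) - ?P' = gather n l ((?C (q + unitvec k) - ?P) - unitvec l)"
        unfolding coords_apex_snoc[OF w l]
        by (simp add: coords_snoc[OF l] algebra_simps flip: gather_diff)
      have "q + unitvec k = apex (w @ [l])"
        if "\<forall>i\<in>{1..n}. (?C (q + unitvec k) - ?P) i = unitvec l i"
      proof -
        have "q + unitvec k \<in> Zn n" "apex w \<in> Zn n"
          using Bset_subset_Zn[OF w] 1 k apex_in_Bset[of w] by (blast intro: Zn_add unitvec_in_Zn)+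
        then show ?thesis
          unfolding apex_snoc using that
          by (intro eq_add_delta_of_coords[OF w l]) (simp_all add: algebra_simps)
      qed
      then show ?thesis
        using pos_vec_gather_minus_unitvec[OF l u] apex_in_Bset unfolding eq by metis
    qed (use Bset_subset_Bset_snoc in blast)
  next
    case (2 x)
    have q: "q + unitvec k = (x + unitvec k) + delta w l" by (simp add: 2(2) algebra_simps)
    from snoc.IH[OF w 2(1) k] show ?thesis
    proof
      assume "pos_vec n (?C (x + unitvec k) - ?P)"
      moreover have "?C' (q + unitvec k) - ?P' = gather n l (?C (x + unitvec k) - ?P)"
        unfolding coords_apex_snoc[OF w l] q
        by (simp add: coords_snoc[OF l] coords_add_delta[OF w l] flip: gather_diff)
      ultimately show ?thesis by (metis pos_vec_gather[OF l])
    next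
      assume "x + unitvec k \<in> Bset w"
      then show ?thesis unfolding q by (intro disjI1 add_delta_in_Bset_snoc)
    qed
  qed
qed

lemma Bset_step_down:
  assumes "set w \<subseteq> {1..n}" and "q \<in> Bset w" and "k \<in> {1..n}"
  shows "q - unitvec k \<in> Bset w \<or> neg_vec n (coords n w (q - unitvec k))"
  using assms
proof (induction w arbitrary: q rule: rev_induct)
  case Nil
  have neg: "neg_vec n (- unitvec k)" using Nil
    by (auto simp: neg_vec_def pos_vec_def nonneg_vec_def unitvec_def)
  have "q = 0" using Nil by (simp add: Bset_Nil)
  then have "coords n [] (q - unitvec k) = 0 - unitvec k"
    using Nil(3) by (simp only: coords_diff coords_zero coords_Nil_unitvec)
  then have "neg_vec n (coords n [] (q - unitvec k))" using neg by (simp only: diff_0)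
  then show ?case by (rule disjI2)
next
  case (snoc l w)
  have l: "l \<in> {1..n}" and w: "set w \<subseteq> {1..n}" and k: "k \<in> {1..n}" using snoc.prems by auto
  let ?C = "coords n w"
  from snoc.prems(2) show ?case
  proof (cases rule: Bset_snocE)
    case 1
    from snoc.IH[OF w 1 k] show ?thesis
      by (auto simp: mem_Bset_snoc coords_snoc[OF l] neg_vec_gather[OF l])
  next
    case (2 x)
    have q: "q - unitvec k = (x - unitvec k) + delta w l" by (simp add: 2(2) algebra_simps)
    from snoc.IH[OF w 2(1) k] show ?thesis
    proof
      assume v: "neg_vec n (?C (x - unitvec k))"
      have eq: "coords n (w @ [l]) (q - unitvec k) = gather n l (?C (x - unitvec k) + unitvec l)"
        unfolding q by (simp add: coords_snoc[OF l] coords_add_delta[OF w l])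
      have "q - unitvec k = 0" if "\<forall>i\<in>{1..n}. ?C (x - unitvec k) i = - unitvec l i"
      proof -
        have "x - unitvec k \<in> Zn n"
          using Bset_subset_Zn[OF w] 2(1) k by (blast intro: Zn_diff unitvec_in_Zn)
        then have "0 = (x - unitvec k) + delta w l"
          using that
          by (intro eq_add_delta_of_coords[OF w l zero_in_Zn]) (simp_all add: coords_zero)
        then show ?thesis by (simp add: q)
      qed
      then show ?thesis
        using neg_vec_gather_plus_unitvec[OF l v] zero_in_Bset unfolding eq by metis
    next
      assume "x - unitvec k \<in> Bset w"
      then show ?thesis unfolding q by (intro disjI1 add_delta_in_Bset_snoc)
    qed
  qed
qed

lemma Bset_connected:
  assumes "set w \<subseteq> {1..n}" and "q \<in> Bset w"
  shows "reach n (Bset w) 0 q"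
  using assms
proof (induction w arbitrary: q rule: rev_induct)
  case Nil
  then show ?case by (simp add: Bset_Nil reach_refl)
next
  case (snoc l w)
  have l: "l \<in> {1..n}" and w: "set w \<subseteq> {1..n}" using snoc.prems by auto
  let ?B = "Bset (w @ [l])" and ?a = "avec w l"
  have sub: "Bset w \<subseteq> ?B" and shift: "\<forall>x\<in>Bset w. x + delta w l \<in> ?B"
    by (simp_all add: Bset_subset_Bset_snoc add_delta_in_Bset_snoc)
  from snoc.prems(2) show ?case
  proof (cases rule: Bset_snocE)
    case 1
    then show ?thesis using reach_mono[OF sub snoc.IH[OF w 1]] by blast
  next
    case (2 x)
    txt \<open>Walk in \<open>B\<^sub>\<omega>\<close> to \<open>a - e\<^sub>l\<close>, step to \<open>a = P + \<delta>\<^sup>l\<close>, walk back in the translate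
      \<open>B\<^sub>\<omega> + \<delta>\<^sup>l\<close> to \<open>\<delta>\<^sup>l\<close>, and from there to \<open>x + \<delta>\<^sup>l\<close>.\<close>
    have a_minus: "?a - unitvec l \<in> Bset w" by (rule avec_minus_unitvec_in_Bset)
    have a: "?a \<in> ?B" using shift apex_in_Bset[of w] by (simp add: avec_eq_apex_plus_delta)
    have "reach n ?B 0 (?a - unitvec l)"
      by (rule reach_mono[OF sub snoc.IH[OF w a_minus]])
    moreover have "reach n ?B (?a - unitvec l) ?a"
      using adj_add_unitvec[OF l, of "?a - unitvec l"] a_minus a sub by (auto intro: reach_step)
    moreover have "reach n ?B ?a (0 + delta w l)"
      using reach_shift[OF shift snoc.IH[OF w apex_in_Bset]]
      by (simp add: avec_eq_apex_plus_delta reach_sym)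
    moreover have "reach n ?B (0 + delta w l) q"
      using reach_shift[OF shift snoc.IH[OF w 2(1)]] by (simp add: 2(2))
    ultimately show ?thesis by (blast intro: reach_trans)
  qed
qed

section \<open>The lattice descriptions of \<open>B\<^sub>\<omega>\<close> and \<open>B\<^sub>\<omega>\<^sub>*\<^sub>j\<close>\<close>

definition window :: "nat \<Rightarrow> nat list \<Rightarrow> nat \<Rightarrow> (nat \<Rightarrow> nat) \<Rightarrow> (nat \<Rightarrow> int) set" where
  "window n w j \<sigma> = Lopen n (avec w j) (Mmat n w) \<sigma> - Lopen n zvec (Mmat n w) \<sigma>"

text \<open>Here \<open>\<sigma> j = n\<close> enters: \<open>M\<^sub>\<omega> a\<^sup>j\<^sub>\<omega> = M\<^sub>\<omega> P + e\<^sub>j\<close> becomes \<open>\<sigma> M\<^sub>\<omega> P + e\<^sub>n\<close>, and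
  being lexicographically below \<open>z + e\<^sub>n\<close> means being at most \<open>z\<close>.\<close>
lemma mem_window_iff:
  assumes w: "set w \<subseteq> {1..n}" and j: "j \<in> {1..n}"
    and \<sigma>: "\<sigma> permutes {1..n}" and \<sigma>j: "\<sigma> j = n"
  shows "x \<in> window n w j \<sigma> \<longleftrightarrow> x \<in> Zn n
    \<and> lex_le n (act \<sigma> (coords n w x)) (act \<sigma> (coords n w (apex w)))
    \<and> \<not> lex_less n (act \<sigma> (coords n w x)) 0"
proof -
  have "act \<sigma> (coords n w (avec w j)) = act \<sigma> (coords n w (apex w)) + unitvec n"
    using w j \<sigma>j
    by (simp add: avec_eq_apex_plus_delta coords_add_delta act_add act_unitvec permutes_bij[OF \<sigma>])
  then show ?thesis
    using j by (auto simp: window_def Lopen_def mv_Mmat[OF w] zvec_eq_zero coords_zero act_zero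
        lex_le_iff_lex_less_plus_unitvec)
qed

lemma Bset_subset_window:
  assumes w: "set w \<subseteq> {1..n}" and j: "j \<in> {1..n}"
    and \<sigma>: "\<sigma> permutes {1..n}" and \<sigma>j: "\<sigma> j = n"
  shows "Bset w \<subseteq> window n w j \<sigma>"
proof
  fix q
  assume q: "q \<in> Bset w"
  let ?y = "act \<sigma> (coords n w q)" and ?P = "act \<sigma> (coords n w (apex w))"
  have "nonneg_vec n (?y - 0)" and "nonneg_vec n (?P - ?y)"
    using Bset_in_box[OF w q] by (simp_all add: nonneg_vec_act[OF \<sigma>] flip: act_diff)
  then have "\<not> lex_less n ?y 0" and "lex_le n ?y ?P"
    using lex_le_not_less lex_le_of_nonneg_vec_diff by blast+
  then show "q \<in> window n w j \<sigma>"
    using q Bset_subset_Zn[OF w] mem_window_iff[OF assms] by blast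
qed

lemma window_neighbour_in_Bset:
  assumes w: "set w \<subseteq> {1..n}" and j: "j \<in> {1..n}"
    and \<sigma>: "\<sigma> permutes {1..n}" and \<sigma>j: "\<sigma> j = n"
    and u: "u \<in> Bset w" and v: "v \<in> window n w j \<sigma>" and "adj n u v"
  shows "v \<in> Bset w"
proof -
  let ?y = "act \<sigma> (coords n w v)" and ?P = "act \<sigma> (coords n w (apex w))"
  obtain k where k: "k \<in> {1..n}" and "v = u + unitvec k \<or> u = v + unitvec k"
    using assms Bset_subset_Zn[OF w] mem_window_iff[OF w j \<sigma> \<sigma>j] by (meson adj_Zn_cases subsetD)
  then consider "v = u + unitvec k" | "v = u - unitvec k" by (auto simp: algebra_simps)
  then show ?thesis
  proof cases
    case 1
    have "lex_le n ?y ?P" using v mem_window_iff[OF w j \<sigma> \<sigma>j] by blast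
    then have not_pos: "\<not> pos_vec n (?y - ?P)"
      using lex_less_of_pos_vec_diff lex_le_not_less by blast
    from Bset_step_up[OF w u k] show ?thesis
    proof
      assume "pos_vec n (coords n w (u + unitvec k) - coords n w (apex w))"
      then have "pos_vec n (?y - ?P)" unfolding 1 act_diff[symmetric] by (rule pos_vec_act[OF \<sigma>])
      with not_pos show ?thesis by contradiction
    qed (simp add: 1)
  next
    case 2
    have "\<not> neg_vec n ?y"
      using v mem_window_iff[OF w j \<sigma> \<sigma>j] lex_less_zero_of_neg_vec by blast
    then show ?thesis
      using Bset_step_down[OF w u k] neg_vec_act[OF \<sigma>] unfolding 2 by blast
  qed
qed

lemma Bset_eq_Comp0_window:
  assumes "set w \<subseteq> {1..n}" and "j \<in> {1..n}" and "\<sigma> permutes {1..n}" and "\<sigma> j = n"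
  shows "Bset w = Comp0 n (window n w j \<sigma>)"
  using zero_in_Bset Bset_subset_window[OF assms] Bset_connected[OF assms(1)]
    window_neighbour_in_Bset[OF assms]
  by (intro Comp0_eq_if_closed[symmetric]) auto

text \<open>Gathering into coordinate \<open>j\<close> only changes the last coordinate after applying \<open>\<sigma>\<close>, and
  changes it by the other coordinates, which vanish when the lexicographic comparison
  reaches it.\<close>
lemma lex_less_act_gather_iff:
  assumes \<sigma>: "\<sigma> permutes {1..n}" and \<sigma>j: "\<sigma> j = n" and j: "j \<in> {1..n}"
  shows "lex_less n (act \<sigma> (gather n j u)) (act \<sigma> (gather n j v))
    \<longleftrightarrow> lex_less n (act \<sigma> u) (act \<sigma> v)"
proof -
  let ?d = "u - v"
  have inv_n: "inv \<sigma> n = j" using permutes_inverses(2)[OF \<sigma>, of j] \<sigma>j by simp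
  have "lex_less n (act \<sigma> (gather n j ?d)) 0 \<longleftrightarrow> lex_less n (act \<sigma> ?d) 0"
  proof (rule lex_less_zero_cong)
    have "inv \<sigma> i \<noteq> j" if "i \<in> {1..<n}" for i
      using that permutes_inverses(1)[OF \<sigma>, of i] \<sigma>j by auto
    then show "\<forall>i\<in>{1..<n}. act \<sigma> (gather n j ?d) i = act \<sigma> ?d i"
      by (simp add: act_def gather_def)
  next
    assume zero: "\<forall>i\<in>{1..<n}. act \<sigma> ?d i = 0"
    have "?d m = 0" if m: "m \<in> {1..n}" "m \<noteq> j" for m
    proof -
      have "\<sigma> m \<noteq> n" using permutes_inj[OF \<sigma>] m(2) \<sigma>j by (metis injD)
      moreover have "\<sigma> m \<in> {1..n}" using permutes_in_image[OF \<sigma>] m(1) by blast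
      ultimately have "\<sigma> m \<in> {1..<n}" by simp
      then have "act \<sigma> ?d (\<sigma> m) = 0" using zero by blast
      then show ?thesis by (simp only: act_def permutes_inverses(2)[OF \<sigma>])
    qed
    then have "(\<Sum>m=1..n. ?d m) = ?d j"
      using j by (simp add: sum.remove)
    then show "act \<sigma> (gather n j ?d) n = act \<sigma> ?d n"
      by (simp add: act_def gather_def inv_n)
  qed
  then show ?thesis
    unfolding lex_less_iff_diff[of n "act \<sigma> u"] lex_less_iff_diff[of n "act \<sigma> (gather n j u)"]
    unfolding act_diff[symmetric] gather_diff[symmetric] .
qed

lemma Lset_eq_Lopen_snoc:
  assumes w: "set w \<subseteq> {1..n}" and j: "j \<in> {1..n}"
    and \<sigma>: "\<sigma> permutes {1..n}" and \<sigma>j: "\<sigma> j = n"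
  shows "Lset n (avec w j) (Mmat n w) \<sigma> = Lopen n (avec (w @ [j]) j) (Mmat n (w @ [j])) \<sigma>"
proof -
  have w': "set (w @ [j]) \<subseteq> {1..n}" using w j by simp
  let ?a = "coords n w (avec w j)"
  have a': "coords n (w @ [j]) (avec (w @ [j]) j) = gather n j (?a + unitvec j)"
    by (simp add: avec_snoc coords_snoc[OF j] coords_add_delta[OF w j])
  have a_plus: "act \<sigma> ?a + unitvec n = act \<sigma> (?a + unitvec j)"
    by (simp add: act_add act_unitvec permutes_bij[OF \<sigma>] \<sigma>j)
  have "lex_le n (act \<sigma> (coords n w x)) (act \<sigma> ?a)
    \<longleftrightarrow> lex_less n (act \<sigma> (coords n w x)) (act \<sigma> (?a + unitvec j))" for x
    using j by (simp add: lex_le_iff_lex_less_plus_unitvec a_plus)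
  also have "\<dots> x \<longleftrightarrow> lex_less n (act \<sigma> (gather n j (coords n w x)))
      (act \<sigma> (gather n j (?a + unitvec j)))"
    for x by (rule lex_less_act_gather_iff[OF \<sigma> \<sigma>j j, symmetric])
  also have "\<dots> x \<longleftrightarrow> lex_less n (act \<sigma> (coords n (w @ [j]) x))
      (act \<sigma> (coords n (w @ [j]) (avec (w @ [j]) j)))" for x
    unfolding a' unfolding coords_snoc[OF j] ..
  finally have "lex_le n (act \<sigma> (coords n w x)) (act \<sigma> ?a)
    \<longleftrightarrow> lex_less n (act \<sigma> (coords n (w @ [j]) x)) (act \<sigma> (coords n (w @ [j]) (avec (w @ [j]) j)))"
    for x .
  then show ?thesis
    unfolding Lset_def Lopen_def mv_Mmat[OF w] mv_Mmat[OF w'] by blast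
qed

lemma Lopen_zero_snoc:
  assumes w: "set w \<subseteq> {1..n}" and j: "j \<in> {1..n}"
    and \<sigma>: "\<sigma> permutes {1..n}" and \<sigma>j: "\<sigma> j = n"
  shows "Lopen n zvec (Mmat n w) \<sigma> = Lopen n zvec (Mmat n (w @ [j])) \<sigma>"
proof -
  have w': "set (w @ [j]) \<subseteq> {1..n}" using w j by simp
  show ?thesis
    unfolding Lopen_def mv_Mmat[OF w] mv_Mmat[OF w'] coords_snoc[OF j]
      lex_less_act_gather_iff[OF \<sigma> \<sigma>j j] ..
qed

theorem lemma3p7:
  fixes n j :: nat and w :: "nat list" and \<sigma> :: "nat \<Rightarrow> nat"
  assumes "set w \<subseteq> {1..n}"
    and "j \<in> {1..n}"
    and "\<sigma> permutes {1..n}"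
    and "\<sigma> j = n"
  shows "Bset w = Comp0 n (Lopen n (avec w j) (Mmat n w) \<sigma> - Lopen n zvec (Mmat n w) \<sigma>)
    \<and> Bset (w @ [j]) = Comp0 n (Lset n (avec w j) (Mmat n w) \<sigma> - Lopen n zvec (Mmat n w) \<sigma>)"
proof
  show "Bset w = Comp0 n (Lopen n (avec w j) (Mmat n w) \<sigma> - Lopen n zvec (Mmat n w) \<sigma>)"
    using Bset_eq_Comp0_window[OF assms] by (simp only: window_def)
  have "set (w @ [j]) \<subseteq> {1..n}" using assms(1,2) by simp
  from Bset_eq_Comp0_window[OF this assms(2-4)]
  show "Bset (w @ [j]) = Comp0 n (Lset n (avec w j) (Mmat n w) \<sigma> - Lopen n zvec (Mmat n w) \<sigma>)"
    unfolding window_def Lset_eq_Lopen_snoc[OF assms] Lopen_zero_snoc[OF assms] .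
qed

end
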